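(* Let $0<q<1$ and let $T$ be an optimal tree for $\mathrm{TDGD}(q)$. For every $s\ge 0$, the leaves of $T$ corresponding to symbols of signature $s$ all lie at depths $d$ with $d\in\{d_0,d_0+1\}$ for some $d_0$; i.e., they occupy at most two consecutive levels of $T$.
   Context: $\mathcal{A}=\{(i,j): i,j\in\mathbb{Z}_{\ge 0}\}$; $\mathrm{TDGD}(q)$ is the distribution $P(i,j)=(1-q)^2q^{i+j}$ on $\mathcal{A}$. A prefix code for $\mathcal{A}$ is a full binary tree whose leaves are in bijection with $\mathcal{A}$; codeword length = depth of leaf; a tree is optimal for $\mathrm{TDGD}(q)$ if it minimizes expected codeword length. The signature of $(i,j)$ is $s=i+j$; a level of a tree is the set of nodes at a given depth. *)

theory Defs
  imports "HOL-Analysis.Analysis"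
begin

text \<open>Binary trees are represented as sets of nodes, each node being the bool list
  of the path from the root.\<close>

definition full_tree :: "bool list set \<Rightarrow> bool" where
  "full_tree T \<longleftrightarrow> [] \<in> T \<and>
     (\<forall>x y. x @ y \<in> T \<longrightarrow> x \<in> T) \<and>
     (\<forall>x\<in>T. (x @ [True] \<in> T) = (x @ [False] \<in> T))"

definition leaves :: "bool list set \<Rightarrow> bool list set" where
  "leaves T = {x \<in> T. x @ [True] \<notin> T \<and> x @ [False] \<notin> T}"

definition prefix_code :: "bool list set \<Rightarrow> (nat \<times> nat \<Rightarrow> bool list) \<Rightarrow> bool" where
  "prefix_code T f \<longleftrightarrow> full_tree T \<and> bij_betw f UNIV (leaves T)"

definition tdgd :: "real \<Rightarrow> nat \<times> nat \<Rightarrow> real" where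
  "tdgd q = (\<lambda>(i, j). (1 - q)^2 * q ^ (i + j))"

definition exp_len :: "real \<Rightarrow> (nat \<times> nat \<Rightarrow> bool list) \<Rightarrow> ennreal" where
  "exp_len q f = (\<Sum>\<^sub>\<infinity> a. ennreal (tdgd q a * real (length (f a))))"

definition optimal :: "real \<Rightarrow> bool list set \<Rightarrow> (nat \<times> nat \<Rightarrow> bool list) \<Rightarrow> bool" where
  "optimal q T f \<longleftrightarrow> prefix_code T f \<and>
     (\<forall>T' f'. prefix_code T' f' \<longrightarrow> exp_len q f \<le> exp_len q f')"

end

theory Submission
  imports Defs
begin

text \<open>
  All symbols \<open>(i, j)\<close> of a fixed signature \<open>s = i + j\<close> have the same probability
  \<open>(1 - q)^2 q^s\<close>. The heart of the proof is an exchange argument valid for any optimal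
  prefix code of finite cost with positive weights: if two symbols \<open>a\<close>, \<open>b\<close> of equal weight had
  \<open>length (f a) + 2 \<le> length (f b)\<close>, delete the leaf \<open>f b = w @ [x]\<close>, lift the sibling subtree
  rooted at \<open>w @ [\<not> x]\<close> up by one level, and split the leaf of \<open>a\<close> to host both \<open>a\<close> and \<open>b\<close>.
  The total length of \<open>a\<close> and \<open>b\<close> does not increase, and the sibling subtree contains a codeword
  (in an optimal tree every node lies above some codeword), which gets strictly shorter.

  Finally it exhibits a prefix code of finite TDGD cost (so optimal codes have finite cost)
  and derives the theorem by taking \<open>d0\<close> to be the shortest length in the signature class.
\<close>

section \<open>Full binary trees\<close>

lemma full_tree_prefix_closed: "full_tree T \<Longrightarrow> x @ y \<in> T \<Longrightarrow> x \<in> T"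
  unfolding full_tree_def by blast

lemma full_tree_root: "full_tree T \<Longrightarrow> [] \<in> T"
  unfolding full_tree_def by blast

lemma full_tree_children: "full_tree T \<Longrightarrow> x \<in> T \<Longrightarrow> (x @ [True] \<in> T) = (x @ [False] \<in> T)"
  unfolding full_tree_def by blast

lemma full_tree_sibling: "full_tree T \<Longrightarrow> x @ [c] \<in> T \<Longrightarrow> x @ [\<not> c] \<in> T"
  using full_tree_children[of T x] full_tree_prefix_closed[of T x "[c]"] by (cases c) auto

lemma leaf_not_extended: "full_tree T \<Longrightarrow> u \<in> leaves T \<Longrightarrow> u @ y \<in> T \<Longrightarrow> y = []"
proof (cases y)
  case (Cons d y')
  assume "full_tree T" "u \<in> leaves T" "u @ y \<in> T"
  then have "u @ [d] \<in> T" using full_tree_prefix_closed[of T "u @ [d]" y'] Cons by simp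
  then show ?thesis using \<open>u \<in> leaves T\<close> by (cases d) (auto simp: leaves_def)
qed simp

section \<open>Splitting a leaf\<close>

definition split_leaf :: "bool list \<Rightarrow> bool list set \<Rightarrow> bool list set" where
  "split_leaf u T = insert (u @ [True]) (insert (u @ [False]) T)"

lemma split_leaf_full:
  assumes ft: "full_tree T" and u: "u \<in> leaves T"
  shows "full_tree (split_leaf u T)"
proof -
  have uT: "u \<in> T" using u unfolding leaves_def by simp
  have mem: "(v \<in> split_leaf u T) = (v \<in> T \<or> (\<exists>c. v = u @ [c]))" for v
    by (auto simp: split_leaf_def ex_bool_eq)
  have closed: "v \<in> split_leaf u T" if vy: "v @ y \<in> split_leaf u T" for v y
  proof (cases "v @ y \<in> T")
    case True then show ?thesis using full_tree_prefix_closed[OF ft] mem by blast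
  next
    case False
    then obtain c where c: "v @ y = u @ [c]" using vy mem by blast
    show ?thesis
    proof (cases y rule: rev_cases)
      case Nil then show ?thesis using vy by simp
    next
      case (snoc y' d)
      then have "v @ y' = u" using c by simp
      then show ?thesis using full_tree_prefix_closed[OF ft, of v y'] uT mem by blast
    qed
  qed
  have children: "(v @ [True] \<in> split_leaf u T) = (v @ [False] \<in> split_leaf u T)"
    if v: "v \<in> split_leaf u T" for v
  proof (cases "v = u")
    case True then show ?thesis by (simp add: split_leaf_def)
  next
    case vnu: False
    have new: "v @ [d] \<noteq> u @ [e]" for d e using vnu by simp
    show ?thesis
    proof (cases "v \<in> T")
      case True
      then show ?thesis using full_tree_children[OF ft True] new by (simp add: split_leaf_def)
    next
      case False
      then have "v @ [d] \<notin> T" for d using full_tree_prefix_closed[OF ft, of v "[d]"] by blast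
      then show ?thesis using new by (simp add: split_leaf_def)
    qed
  qed
  show ?thesis
    unfolding full_tree_def using full_tree_root[OF ft] closed children
    by (auto simp: split_leaf_def)
qed

lemma leaves_split_leaf:
  assumes ft: "full_tree T" and u: "u \<in> leaves T"
  shows "leaves (split_leaf u T) = insert (u @ [True]) (insert (u @ [False]) (leaves T - {u}))"
proof -
  have no_child: "u @ [c] \<notin> T" for c using u unfolding leaves_def by (cases c) auto
  have no_grandchild: "u @ [c] @ [d] \<notin> T" for c d
    using no_child full_tree_prefix_closed[OF ft, of "u @ [c]" "[d]"] by auto
  show ?thesis
    unfolding leaves_def split_leaf_def using no_child no_grandchild by auto
qed

lemma split_leaf_code:
  assumes ft: "full_tree T" and bij: "bij_betw f S (leaves T)" and a: "a \<in> S" and b: "b \<notin> S"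
  shows "bij_betw (f(a := f a @ [False], b := f a @ [True])) (insert b S)
           (leaves (split_leaf (f a) T))"
proof -
  define u where "u = f a"
  define g where "g = f(a := u @ [False], b := u @ [True])"
  have u: "u \<in> leaves T" using bij a unfolding u_def bij_betw_def by auto
  have new: "u @ [c] \<notin> leaves T" for c using u unfolding leaves_def by (cases c) auto
  have ab: "a \<noteq> b" using a b by auto
  have "bij_betw f (S - {a}) (leaves T - {u})"
    using bij_betw_DiffI[OF bij, of "{a}" "{u}"] a u by (simp add: u_def)
  then have rest: "bij_betw g (S - {a}) (leaves T - {u})"
    by (rule bij_betw_cong[THEN iffD1, rotated]) (use b in \<open>auto simp: g_def\<close>)
  have "bij_betw g ((S - {a}) \<union> {a}) ((leaves T - {u}) \<union> {g a})"
    using notIn_Un_bij_betw3[of a "S - {a}" g "leaves T - {u}"] rest ab new by (simp add: g_def)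
  then have "bij_betw g ((S - {a}) \<union> {a} \<union> {b}) ((leaves T - {u}) \<union> {g a} \<union> {g b})"
    using notIn_Un_bij_betw3[of b "(S - {a}) \<union> {a}" g "(leaves T - {u}) \<union> {g a}"] ab new b
    by (simp add: g_def)
  moreover have "(S - {a}) \<union> {a} \<union> {b} = insert b S" using a by auto
  moreover have "(leaves T - {u}) \<union> {g a} \<union> {g b} = leaves (split_leaf u T)"
    using ab leaves_split_leaf[OF ft u] by (auto simp: g_def)
  ultimately show ?thesis unfolding g_def u_def by simp
qed

section \<open>Collapsing a subtree\<close>

definition collapse :: "bool list \<Rightarrow> bool \<Rightarrow> bool list set \<Rightarrow> bool list set" where
  "collapse w x T = {v \<in> T. \<not> (\<exists>r. v = w @ r)} \<union> {w @ r |r. w @ [\<not> x] @ r \<in> T}"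

definition collapse_map :: "bool list \<Rightarrow> bool \<Rightarrow> bool list \<Rightarrow> bool list" where
  "collapse_map w x v = (if \<exists>r. v = w @ [\<not> x] @ r then w @ drop (Suc (length w)) v else v)"

lemma collapse_map_moved: "collapse_map w x (w @ [\<not> x] @ r) = w @ r"
  by (auto simp: collapse_map_def)

lemma collapse_map_fixed: "\<not> (\<exists>r. v = w @ [\<not> x] @ r) \<Longrightarrow> collapse_map w x v = v"
  by (auto simp: collapse_map_def)

lemma collapse_map_length_le: "length (collapse_map w x v) \<le> length v"
  by (auto simp: collapse_map_def)

lemma collapse_outside: "\<not> (\<exists>r. v = w @ r) \<Longrightarrow> (v \<in> collapse w x T) = (v \<in> T)"
  unfolding collapse_def by auto

lemma collapse_inside: "(w @ r \<in> collapse w x T) = (w @ [\<not> x] @ r \<in> T)"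
  unfolding collapse_def by auto

lemma collapse_contains_base: "full_tree T \<Longrightarrow> w @ [x] \<in> T \<Longrightarrow> w \<in> collapse w x T"
  using collapse_inside[of w "[]" x T] full_tree_sibling by auto

lemma not_extends_snoc: "\<not> (\<exists>r. v = w @ r) \<Longrightarrow> v @ [c] = w @ r' \<Longrightarrow> r' = [] \<and> v @ [c] = w"
  by (cases r' rule: rev_cases) auto

lemma not_extends_append: "\<not> (\<exists>r. v = w @ r) \<Longrightarrow> v @ y = w @ r' \<Longrightarrow> \<exists>us. w = v @ us"
  by (auto simp: append_eq_append_conv2)

lemma collapse_prefix_closed:
  assumes ft: "full_tree T" and wx: "w @ [x] \<in> T" and vy: "v @ y \<in> collapse w x T"
  shows "v \<in> collapse w x T"
proof (cases "\<exists>r. v = w @ r")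
  case True
  then obtain r where v: "v = w @ r" by blast
  then have "w @ [\<not> x] @ r @ y \<in> T" using vy collapse_inside[of w "r @ y" x T] by simp
  then have "w @ [\<not> x] @ r \<in> T" using full_tree_prefix_closed[OF ft, of "w @ [\<not> x] @ r" y] by simp
  then show ?thesis using collapse_inside v by simp
next
  case False
  show ?thesis
  proof (cases "\<exists>r. v @ y = w @ r")
    case True
    then obtain us where "w = v @ us" using not_extends_append[OF False] by blast
    then have "v \<in> T" using full_tree_prefix_closed[OF ft] full_tree_prefix_closed[OF ft wx] by blast
    then show ?thesis using collapse_outside[OF False] by simp
  next
    case outside: False
    then have "v @ y \<in> T" using vy collapse_outside[OF outside] by simp
    then show ?thesis using collapse_outside[OF False] full_tree_prefix_closed[OF ft] by blast
  qed
qed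

lemma collapse_children:
  assumes ft: "full_tree T" and wx: "w @ [x] \<in> T" and v: "v \<in> collapse w x T"
  shows "(v @ [True] \<in> collapse w x T) = (v @ [False] \<in> collapse w x T)"
proof (cases "\<exists>r. v = w @ r")
  case True
  then obtain r where r: "v = w @ r" by blast
  have "w @ [\<not> x] @ r \<in> T" using v collapse_inside r by simp
  then show ?thesis
    using full_tree_children[OF ft, of "w @ [\<not> x] @ r"] collapse_inside[of w "r @ [_]" x T] r by simp
next
  case False
  have vT: "v \<in> T" using v collapse_outside[OF False] by simp
  show ?thesis
  proof (cases "\<exists>c. v @ [c] = w")
    case True
    then obtain c where c: "v @ [c] = w" by blast
    have "v @ [\<not> c] \<in> T" using full_tree_sibling[OF ft] full_tree_prefix_closed[OF ft wx] c by blast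
    moreover have "\<not> (\<exists>r. v @ [\<not> c] = w @ r)"
    proof
      assume "\<exists>r. v @ [\<not> c] = w @ r"
      then have "v @ [\<not> c] = w" using not_extends_snoc[OF False] by blast
      then show False using c by (metis append1_eq_conv)
    qed
    ultimately have "v @ [\<not> c] \<in> collapse w x T" using collapse_outside by blast
    moreover have "v @ [c] \<in> collapse w x T" using c collapse_contains_base[OF ft wx] by simp
    ultimately show ?thesis by (cases c) auto
  next
    case False3: False
    have away: "\<not> (\<exists>r. v @ [c] = w @ r)" for c using not_extends_snoc[OF False] False3 by blast
    show ?thesis
      using collapse_outside[OF away[of True]] collapse_outside[OF away[of False]]
        full_tree_children[OF ft vT] by simp
  qed
qed

lemma collapse_full:
  assumes ft: "full_tree T" and wx: "w @ [x] \<in> T"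
  shows "full_tree (collapse w x T)"
proof -
  have "[] \<in> collapse w x T"
    using collapse_contains_base[OF ft wx] collapse_outside[of "[]" w x T] full_tree_root[OF ft]
    by (cases "w = []") auto
  then show ?thesis
    unfolding full_tree_def
  proof (intro conjI allI impI ballI)
    show "v \<in> collapse w x T" if "v @ y \<in> collapse w x T" for v y
      by (rule collapse_prefix_closed[OF ft wx that])
    show "(v @ [True] \<in> collapse w x T) = (v @ [False] \<in> collapse w x T)"
      if "v \<in> collapse w x T" for v
      by (rule collapse_children[OF ft wx that])
  qed
qed

lemma leaves_collapse_outside:
  assumes ft: "full_tree T" and wx: "w @ [x] \<in> T" and nw: "\<not> (\<exists>r. v = w @ r)"
  shows "(v \<in> leaves (collapse w x T)) = (v \<in> leaves T)"
proof (cases "\<exists>c. v @ [c] = w")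
  case True
  then obtain c where c: "v @ [c] = w" by blast
  have "v \<notin> leaves T" using full_tree_prefix_closed[OF ft wx] c unfolding leaves_def by (cases c) auto
  moreover have "v \<notin> leaves (collapse w x T)"
    using collapse_contains_base[OF ft wx] c unfolding leaves_def by (cases c) auto
  ultimately show ?thesis by simp
next
  case False
  have away: "\<not> (\<exists>r. v @ [c] = w @ r)" for c using not_extends_snoc[OF nw] False by blast
  show ?thesis
    unfolding leaves_def
    using collapse_outside[OF away[of True]] collapse_outside[OF away[of False]] collapse_outside[OF nw]
    by simp
qed

lemma leaves_collapse_inside: "(w @ r \<in> leaves (collapse w x T)) = (w @ [\<not> x] @ r \<in> leaves T)"
  unfolding leaves_def
  using collapse_inside[of w r x T] collapse_inside[of w "r @ [True]" x T]
    collapse_inside[of w "r @ [False]" x T] by simp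

lemma leaf_away_from_base:
  assumes wx: "w @ [x] \<in> T" and v: "v \<in> leaves T"
    and nx: "\<not> (\<exists>r. v = w @ [x] @ r)" and nnx: "\<not> (\<exists>r. v = w @ [\<not> x] @ r)"
  shows "\<not> (\<exists>r. v = w @ r)"
proof
  assume "\<exists>r. v = w @ r"
  then obtain r where r: "v = w @ r" by blast
  show False
  proof (cases r)
    case Nil
    then show ?thesis using wx v r unfolding leaves_def by (cases x) auto
  next
    case (Cons d r')
    then show ?thesis using nx nnx r by (cases "d = x") auto
  qed
qed

lemma collapse_map_inj_on:
  assumes wx: "w @ [x] \<in> T"
  shows "inj_on (collapse_map w x) (leaves T - {v. \<exists>r. v = w @ [x] @ r})"
proof (rule inj_onI)
  fix u v
  assume u: "u \<in> leaves T - {v. \<exists>r. v = w @ [x] @ r}" and v: "v \<in> leaves T - {v. \<exists>r. v = w @ [x] @ r}"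
    and eq: "collapse_map w x u = collapse_map w x v"
  have away: "\<not> (\<exists>r. y = w @ r)"
    if "y \<in> leaves T - {v. \<exists>r. v = w @ [x] @ r}" "\<not> (\<exists>r. y = w @ [\<not> x] @ r)" for y
    using leaf_away_from_base[OF wx] that by blast
  show "u = v"
  proof (cases "\<exists>r. u = w @ [\<not> x] @ r"; cases "\<exists>r. v = w @ [\<not> x] @ r")
    assume "\<exists>r. u = w @ [\<not> x] @ r" "\<exists>r. v = w @ [\<not> x] @ r"
    then show ?thesis using eq collapse_map_moved by auto
  next
    assume a: "\<exists>r. u = w @ [\<not> x] @ r" "\<not> (\<exists>r. v = w @ [\<not> x] @ r)"
    then obtain r where "u = w @ [\<not> x] @ r" by blast
    then have "v = w @ r" using eq collapse_map_fixed[OF a(2)] collapse_map_moved by simp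
    then show ?thesis using away[OF v a(2)] by blast
  next
    assume a: "\<not> (\<exists>r. u = w @ [\<not> x] @ r)" "\<exists>r. v = w @ [\<not> x] @ r"
    then obtain r where "v = w @ [\<not> x] @ r" by blast
    then have "u = w @ r" using eq collapse_map_fixed[OF a(1)] collapse_map_moved by simp
    then show ?thesis using away[OF u a(1)] by blast
  next
    assume "\<not> (\<exists>r. u = w @ [\<not> x] @ r)" "\<not> (\<exists>r. v = w @ [\<not> x] @ r)"
    then show ?thesis using eq collapse_map_fixed by metis
  qed
qed

lemma collapse_map_image:
  assumes ft: "full_tree T" and wx: "w @ [x] \<in> T"
  shows "collapse_map w x ` (leaves T - {v. \<exists>r. v = w @ [x] @ r}) = leaves (collapse w x T)"
proof (intro equalityI subsetI)
  fix y assume "y \<in> collapse_map w x ` (leaves T - {v. \<exists>r. v = w @ [x] @ r})"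
  then obtain v where v: "v \<in> leaves T" "\<not> (\<exists>r. v = w @ [x] @ r)" and y: "y = collapse_map w x v"
    by blast
  show "y \<in> leaves (collapse w x T)"
  proof (cases "\<exists>r. v = w @ [\<not> x] @ r")
    case True
    then obtain r where "v = w @ [\<not> x] @ r" by blast
    then show ?thesis using y v leaves_collapse_inside collapse_map_moved by simp
  next
    case False
    then show ?thesis
      using y v leaves_collapse_outside[OF ft wx leaf_away_from_base[OF wx v False]] collapse_map_fixed
      by simp
  qed
next
  fix y assume y: "y \<in> leaves (collapse w x T)"
  show "y \<in> collapse_map w x ` (leaves T - {v. \<exists>r. v = w @ [x] @ r})"
  proof (cases "\<exists>r. y = w @ r")
    case True
    then obtain r where r: "y = w @ r" by blast
    have "w @ [\<not> x] @ r \<in> leaves T - {v. \<exists>r. v = w @ [x] @ r}"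
      using y r leaves_collapse_inside by auto
    moreover have "y = collapse_map w x (w @ [\<not> x] @ r)" using r collapse_map_moved by simp
    ultimately show ?thesis by blast
  next
    case False
    then have "y \<in> leaves T - {v. \<exists>r. v = w @ [x] @ r}"
      using y leaves_collapse_outside[OF ft wx False] by auto
    moreover have "y = collapse_map w x y" using False by (intro collapse_map_fixed[symmetric]) auto
    ultimately show ?thesis by blast
  qed
qed

lemma bij_betw_restrict:
  assumes bij: "bij_betw f S L"
  shows "bij_betw f {c \<in> S. P (f c)} {v \<in> L. P v}"
proof (rule bij_betw_subset[OF bij])
  show "f ` {c \<in> S. P (f c)} = {v \<in> L. P v}"
    using bij_betw_imp_surj_on[OF bij] by blast
qed auto

lemma collapse_code:
  assumes ft: "full_tree T" and wx: "w @ [x] \<in> T" and bij: "bij_betw f S (leaves T)"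
  shows "bij_betw (collapse_map w x \<circ> f) {c \<in> S. \<not> (\<exists>r. f c = w @ [x] @ r)}
           (leaves (collapse w x T))"
proof (rule bij_betw_trans)
  show "bij_betw f {c \<in> S. \<not> (\<exists>r. f c = w @ [x] @ r)} {v \<in> leaves T. \<not> (\<exists>r. v = w @ [x] @ r)}"
    by (rule bij_betw_restrict[OF bij])
  have kept: "{v \<in> leaves T. \<not> (\<exists>r. v = w @ [x] @ r)} = leaves T - {v. \<exists>r. v = w @ [x] @ r}"
    by blast
  show "bij_betw (collapse_map w x) {v \<in> leaves T. \<not> (\<exists>r. v = w @ [x] @ r)}
      (leaves (collapse w x T))"
    unfolding kept bij_betw_def
    by (intro conjI collapse_map_inj_on[OF wx] collapse_map_image[OF ft wx])
qed

section \<open>Moving a leaf next to another one\<close>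

text \<open>The exchange step: remove the leaf \<open>f b = w @ [x]\<close> (collapsing its sibling subtree up one
  level) and re-insert \<open>b\<close> as the sibling of \<open>a\<close> by splitting the leaf of \<open>a\<close>.\<close>

lemma relocate_leaf:
  assumes ft: "full_tree T" and bij: "bij_betw f UNIV (leaves T)"
    and fb: "f b = w @ [x]" and ab: "a \<noteq> b"
  shows "\<exists>T' f'. full_tree T' \<and> bij_betw f' UNIV (leaves T')
    \<and> length (f' a) \<le> length (f a) + 1 \<and> length (f' b) \<le> length (f a) + 1
    \<and> (\<forall>c. c \<notin> {a, b} \<longrightarrow> length (f' c) \<le> length (f c))
    \<and> (\<forall>c r. c \<notin> {a, b} \<longrightarrow> f c = w @ [\<not> x] @ r \<longrightarrow> length (f' c) < length (f c))"
proof -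
  have leaf: "f c \<in> leaves T" for c using bij unfolding bij_betw_def by auto
  have wx: "w @ [x] \<in> T" using leaf[of b] fb unfolding leaves_def by simp
  have only_b: "c = b" if "f c = w @ [x] @ r" for c r
  proof -
    have "r = []"
      using leaf_not_extended[OF ft leaf[of b]] leaf[of c] that fb unfolding leaves_def by simp
    then have "f c = f b" using that fb by simp
    then show "c = b" using bij unfolding bij_betw_def by (simp add: inj_eq)
  qed
  have kept: "{c \<in> UNIV. \<not> (\<exists>r. f c = w @ [x] @ r)} = UNIV - {b}"
  proof (intro equalityI subsetI)
    fix c assume "c \<in> {c \<in> UNIV. \<not> (\<exists>r. f c = w @ [x] @ r)}"
    then show "c \<in> UNIV - {b}" using fb by force
  next
    fix c assume "c \<in> UNIV - {b}"
    then show "c \<in> {c \<in> UNIV. \<not> (\<exists>r. f c = w @ [x] @ r)}" using only_b by blast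
  qed
  define f1 where "f1 = collapse_map w x \<circ> f"
  define C where "C = collapse w x T"
  have bij1: "bij_betw f1 (UNIV - {b}) (leaves C)"
    using collapse_code[OF ft wx bij] unfolding kept f1_def C_def .
  have ft1: "full_tree C" unfolding C_def by (rule collapse_full[OF ft wx])
  have a_leaf: "f1 a \<in> leaves C" using bij1 ab unfolding bij_betw_def by auto
  define f2 where "f2 = f1(a := f1 a @ [False], b := f1 a @ [True])"
  have "bij_betw f2 (insert b (UNIV - {b})) (leaves (split_leaf (f1 a) C))"
    unfolding f2_def by (rule split_leaf_code[OF ft1 bij1]) (use ab in auto)
  moreover have "insert b (UNIV - {b}) = UNIV" by blast
  ultimately have bij2: "bij_betw f2 UNIV (leaves (split_leaf (f1 a) C))" by simp
  have f1_le: "length (f1 c) \<le> length (f c)" for c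
    unfolding f1_def using collapse_map_length_le by simp
  show ?thesis
  proof (intro exI conjI allI impI)
    show "full_tree (split_leaf (f1 a) C)" by (rule split_leaf_full[OF ft1 a_leaf])
    show "bij_betw f2 UNIV (leaves (split_leaf (f1 a) C))" by (rule bij2)
    show "length (f2 a) \<le> length (f a) + 1" "length (f2 b) \<le> length (f a) + 1"
      unfolding f2_def using ab f1_le[of a] by auto
    show "length (f2 c) \<le> length (f c)" if "c \<notin> {a, b}" for c
      unfolding f2_def using that f1_le[of c] by simp
    show "length (f2 c) < length (f c)" if "c \<notin> {a, b}" "f c = w @ [\<not> x] @ r" for c r
      unfolding f2_def f1_def using that collapse_map_moved[of w x r] by simp
  qed
qed

section \<open>Weighted cost and optimal codes\<close>

definition wcost :: "('a \<Rightarrow> real) \<Rightarrow> ('a \<Rightarrow> bool list) \<Rightarrow> ennreal" where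
  "wcost p f = (\<Sum>\<^sub>\<infinity>a. ennreal (p a * real (length (f a))))"

definition optimal_code :: "('a \<Rightarrow> real) \<Rightarrow> bool list set \<Rightarrow> ('a \<Rightarrow> bool list) \<Rightarrow> bool" where
  "optimal_code p T f \<longleftrightarrow> full_tree T \<and> bij_betw f UNIV (leaves T) \<and>
     (\<forall>T' f'. full_tree T' \<and> bij_betw f' UNIV (leaves T') \<longrightarrow> wcost p f \<le> wcost p f')"

lemma infsum_ennreal_split_finite:
  fixes h :: "'a \<Rightarrow> real"
  assumes "finite F" "\<And>c. h c \<ge> 0"
  shows "(\<Sum>\<^sub>\<infinity>c. ennreal (h c)) = ennreal (sum h F) + (\<Sum>\<^sub>\<infinity>c\<in>-F. ennreal (h c))"
proof -
  have "(\<Sum>\<^sub>\<infinity>c. ennreal (h c)) = (\<Sum>\<^sub>\<infinity>c\<in>F \<union> -F. ennreal (h c))" by simp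
  also have "\<dots> = (\<Sum>\<^sub>\<infinity>c\<in>F. ennreal (h c)) + (\<Sum>\<^sub>\<infinity>c\<in>-F. ennreal (h c))"
    by (rule infsum_Un_disjoint) (auto simp: nonneg_summable_on_complete)
  also have "(\<Sum>\<^sub>\<infinity>c\<in>F. ennreal (h c)) = ennreal (sum h F)"
    using assms by (simp add: sum_ennreal)
  finally show ?thesis .
qed

lemma infsum_ennreal_strict_mono:
  fixes g g' :: "'a \<Rightarrow> real"
  assumes F: "finite F" and g: "\<And>c. g c \<ge> 0" and g': "\<And>c. g' c \<ge> 0"
    and lt: "sum g' F < sum g F" and le: "\<And>c. c \<notin> F \<Longrightarrow> g' c \<le> g c"
    and fin: "(\<Sum>\<^sub>\<infinity>c. ennreal (g c)) < \<infinity>"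
  shows "(\<Sum>\<^sub>\<infinity>c. ennreal (g' c)) < (\<Sum>\<^sub>\<infinity>c. ennreal (g c))"
proof -
  define B where "B = (\<Sum>\<^sub>\<infinity>c\<in>-F. ennreal (g c))"
  define B' where "B' = (\<Sum>\<^sub>\<infinity>c\<in>-F. ennreal (g' c))"
  have split: "(\<Sum>\<^sub>\<infinity>c. ennreal (g c)) = ennreal (sum g F) + B"
    unfolding B_def by (rule infsum_ennreal_split_finite[OF F g])
  have split': "(\<Sum>\<^sub>\<infinity>c. ennreal (g' c)) = ennreal (sum g' F) + B'"
    unfolding B'_def by (rule infsum_ennreal_split_finite[OF F g'])
  have "B' \<le> B" unfolding B_def B'_def
    by (rule infsum_mono) (auto intro: ennreal_leI le simp: nonneg_summable_on_complete)
  moreover have "B < \<infinity>" using fin split by (simp add: top_unique)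
  moreover have "ennreal (sum g' F) < ennreal (sum g F)"
    using lt sum_nonneg[of F g'] g' by (intro ennreal_lessI) auto
  ultimately have "ennreal (sum g' F) + B' < ennreal (sum g F) + B"
    by (metis add_left_mono le_less_trans order_less_le ennreal_add_left_cancel_less add.commute)
  then show ?thesis using split split' by simp
qed

lemma optimal_code_no_improvement:
  assumes opt: "optimal_code p T f" and fin: "wcost p f < \<infinity>" and nonneg: "\<And>a. 0 \<le> p a"
    and ft': "full_tree T'" and bij': "bij_betw f' UNIV (leaves T')" and F: "finite F"
    and lt: "(\<Sum>c\<in>F. p c * real (length (f' c))) < (\<Sum>c\<in>F. p c * real (length (f c)))"
    and le: "\<And>c. c \<notin> F \<Longrightarrow> length (f' c) \<le> length (f c)"
  shows False
proof -
  have "wcost p f' < wcost p f"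
    unfolding wcost_def
  proof (rule infsum_ennreal_strict_mono[OF F _ _ lt])
    show "0 \<le> p c * real (length (f c))" "0 \<le> p c * real (length (f' c))" for c
      using nonneg[of c] by auto
    show "p c * real (length (f' c)) \<le> p c * real (length (f c))" if "c \<notin> F" for c
      using nonneg[of c] le[OF that] by (auto intro: mult_left_mono)
    show "(\<Sum>\<^sub>\<infinity>c. ennreal (p c * real (length (f c)))) < \<infinity>"
      using fin unfolding wcost_def .
  qed
  then show False using opt ft' bij' unfolding optimal_code_def by (meson leD)
qed

text \<open>In an optimal code with positive weights every node of the tree lies above some
  codeword: an empty subtree could be collapsed away, shortening a codeword.\<close>

lemma optimal_code_nodes_used:
  assumes opt: "optimal_code p T f" and fin: "wcost p f < \<infinity>" and pos: "\<And>a. 0 < p a"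
    and v: "v \<in> T"
  shows "\<exists>c r. f c = v @ r"
  using v
proof (induction v rule: rev_induct)
  case Nil then show ?case by auto
next
  case (snoc x w)
  have ft: "full_tree T" and bij: "bij_betw f UNIV (leaves T)"
    using opt unfolding optimal_code_def by auto
  obtain c r where c: "f c = w @ r"
    using snoc.IH full_tree_prefix_closed[OF ft snoc.prems] by blast
  show ?case
  proof (rule ccontr)
    assume unused: "\<not> (\<exists>c r. f c = (w @ [x]) @ r)"
    have "f c \<in> leaves T" using bij unfolding bij_betw_def by auto
    then have "r \<noteq> []" using c snoc.prems unfolding leaves_def by (cases x) auto
    then obtain d r' where r: "r = d # r'" by (cases r) auto
    have "d \<noteq> x"
    proof
      assume "d = x"
      then have "f c = (w @ [x]) @ r'" using c r by simp
      then show False using unused by blast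
    qed
    then have r': "f c = w @ [\<not> x] @ r'" using c r by simp
    have "{c \<in> UNIV. \<not> (\<exists>r. f c = w @ [x] @ r)} = UNIV" using unused by auto
    then have bij': "bij_betw (collapse_map w x \<circ> f) UNIV (leaves (collapse w x T))"
      using collapse_code[OF ft snoc.prems bij] by simp
    have "length ((collapse_map w x \<circ> f) c) < length (f c)"
      using r' collapse_map_moved[of w x r'] by simp
    then show False
      using optimal_code_no_improvement[OF opt fin _ collapse_full[OF ft snoc.prems] bij', of "{c}"]
        pos[of c] pos collapse_map_length_le by (auto simp: less_imp_le)
  qed
qed

text \<open>Otherwise relocate the longer codeword \<open>w @ [x]\<close> next to the shorter one;
  the codewords of \<open>a\<close> and \<open>b\<close> do not get more expensive in total, and a codeword in the
  (nonempty) sibling subtree at \<open>w @ [\<not> x]\<close> becomes strictly shorter.\<close>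

lemma optimal_code_equal_weights:
  assumes opt: "optimal_code p T f" and fin: "wcost p f < \<infinity>" and pos: "\<And>a. 0 < p a"
    and eq: "p a = p b"
  shows "length (f b) \<le> length (f a) + 1"
proof (rule ccontr)
  assume "\<not> length (f b) \<le> length (f a) + 1"
  then have gap: "length (f a) + 2 \<le> length (f b)" by simp
  have ft: "full_tree T" and bij: "bij_betw f UNIV (leaves T)"
    using opt unfolding optimal_code_def by auto
  obtain w x where fb: "f b = w @ [x]" using gap by (cases "f b" rule: rev_exhaust) auto
  have "f b \<in> leaves T" using bij unfolding bij_betw_def by auto
  then have "w @ [x] \<in> T" using fb unfolding leaves_def by simp
  then obtain c r where c: "f c = (w @ [\<not> x]) @ r"
    using optimal_code_nodes_used[OF opt fin pos] full_tree_sibling[OF ft] by blast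
  have ab: "a \<noteq> b" using gap by auto
  have cb: "c \<noteq> b" using c fb by auto
  have ca: "c \<noteq> a" using c fb gap by auto
  obtain T' f' where ft': "full_tree T'" and bij': "bij_betw f' UNIV (leaves T')"
    and la: "length (f' a) \<le> length (f a) + 1" and lb: "length (f' b) \<le> length (f a) + 1"
    and le: "\<And>c. c \<notin> {a, b} \<Longrightarrow> length (f' c) \<le> length (f c)"
    and lc: "length (f' c) < length (f c)"
    using relocate_leaf[OF ft bij fb ab] c ca cb by fastforce
  show False
  proof (rule optimal_code_no_improvement[OF opt fin _ ft' bij', of "{a, b, c}"])
    have "p c * real (length (f' c)) < p c * real (length (f c))" using lc pos[of c] by simp
    moreover have "p a * real (length (f' a)) + p b * real (length (f' b))
        \<le> p a * real (length (f a)) + p b * real (length (f b))"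
    proof -
      have "real (length (f' a)) + real (length (f' b)) \<le> real (length (f a)) + real (length (f b))"
        using la lb gap by linarith
      then show ?thesis using eq pos[of a] by (simp add: distrib_left[symmetric])
    qed
    ultimately show "(\<Sum>c\<in>{a, b, c}. p c * real (length (f' c)))
        < (\<Sum>c\<in>{a, b, c}. p c * real (length (f c)))"
      using ab ca cb by simp
  qed (use le pos less_imp_le in auto)
qed

section \<open>A prefix code of finite cost for TDGD\<close>

text \<open>Its lengths \<open>i + j + 2\<close> are integrable against \<open>TDGD(q)\<close>, so optimal codes have finite cost.\<close>

definition unary :: "nat \<Rightarrow> bool list" where
  "unary n = replicate n True @ [False]"

definition pair_code :: "nat \<times> nat \<Rightarrow> bool list" where
  "pair_code = (\<lambda>(i, j). unary i @ unary j)"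

definition pair_tree :: "bool list set" where
  "pair_tree = {v. \<exists>k. v = replicate k True} \<union> {v. \<exists>i k. v = unary i @ replicate k True}
     \<union> range pair_code"

text \<open>The number of \<open>False\<close> letters distinguishes the three kinds of nodes.\<close>

abbreviation zeros :: "bool list \<Rightarrow> nat" where
  "zeros v \<equiv> length (filter Not v)"

lemma zeros_unary [simp]: "zeros (unary i) = 1"
  by (simp add: unary_def)

lemma zeros_replicate_True [simp]: "zeros (replicate k True) = 0"
  by (induct k) auto

lemma zeros_pair_code [simp]: "zeros (pair_code c) = 2"
  by (cases c) (simp add: pair_code_def)

lemma last_pair_code: "last (pair_code c) = False"
  by (cases c) (simp add: pair_code_def unary_def)

lemma length_pair_code: "length (pair_code (i, j)) = i + j + 2"
  by (simp add: pair_code_def unary_def)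

lemma unary_append_inj: "unary i @ xs = unary i' @ ys \<Longrightarrow> i = i' \<and> xs = ys"
proof (induct i arbitrary: i')
  case 0 then show ?case by (cases i') (auto simp: unary_def)
next
  case (Suc i) then show ?case by (cases i') (auto simp: unary_def)
qed

lemma inj_pair_code: "inj pair_code"
proof (rule injI)
  fix c c' assume "pair_code c = pair_code c'"
  then obtain i j i' j' where cc: "c = (i, j)" "c' = (i', j')"
    and eq: "unary i @ unary j = unary i' @ unary j'"
    unfolding pair_code_def by (cases c, cases c') auto
  then have "i = i'" "unary j = unary j'" using unary_append_inj by blast+
  moreover have "j = j'" using unary_append_inj[of j "[]" j' "[]"] \<open>unary j = unary j'\<close> by simp
  ultimately show "c = c'" using cc by simp
qed

lemma pair_tree_parent: "v @ [c] \<in> pair_tree \<Longrightarrow> v \<in> pair_tree"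
proof -
  assume "v @ [c] \<in> pair_tree"
  then consider (spine) k where "v @ [c] = replicate k True"
    | (branch) i k where "v @ [c] = unary i @ replicate k True"
    | (code) i j where "v @ [c] = unary i @ unary j"
    unfolding pair_tree_def pair_code_def by auto
  then show "v \<in> pair_tree"
  proof cases
    case (spine k)
    then show ?thesis
      by (cases k) (auto simp: pair_tree_def replicate_append_same[symmetric]
          simp del: replicate_append_same)
  next
    case (branch i k)
    then show ?thesis
    proof (cases k)
      case 0 then show ?thesis using branch by (auto simp: pair_tree_def unary_def)
    next
      case (Suc k') then show ?thesis using branch
        by (auto simp: pair_tree_def replicate_append_same[symmetric] simp del: replicate_append_same)
    qed
  next
    case (code i j)
    then have "v = unary i @ replicate j True" by (simp add: unary_def)
    then show ?thesis by (auto simp: pair_tree_def)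
  qed
qed

lemma pair_tree_prefix_closed: "v @ y \<in> pair_tree \<Longrightarrow> v \<in> pair_tree"
proof (induct y rule: rev_induct)
  case Nil then show ?case by simp
next
  case (snoc c y) then show ?case using pair_tree_parent[of "v @ y" c] by simp
qed

text \<open>Codewords have no children, since a child would contain three \<open>False\<close> letters or
  end with \<open>True\<close>.\<close>

lemma pair_code_childless: "pair_code c @ [b] \<notin> pair_tree"
proof
  assume child: "pair_code c @ [b] \<in> pair_tree"
  have "pair_code c @ [b] \<in> range pair_code"
    using child unfolding pair_tree_def
  proof (elim UnE CollectE exE)
    fix k assume "pair_code c @ [b] = replicate k True"
    then have "zeros (pair_code c @ [b]) = zeros (replicate k True)" by (rule arg_cong)
    then show ?thesis by simp
  next
    fix i k assume "pair_code c @ [b] = unary i @ replicate k True"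
    then have "zeros (pair_code c @ [b]) = zeros (unary i @ replicate k True)" by (rule arg_cong)
    then show ?thesis by simp
  qed
  then obtain c' where c': "pair_code c @ [b] = pair_code c'" by blast
  have "zeros (pair_code c @ [b]) = 2" "last (pair_code c @ [b]) = False"
    by (simp only: c' zeros_pair_code, simp only: c' last_pair_code)
  then show False by (cases b) auto
qed

lemma pair_tree_branching:
  assumes "v \<in> pair_tree"
  shows "(v @ [True] \<in> pair_tree \<and> v @ [False] \<in> pair_tree) \<or> v \<in> range pair_code"
proof -
  have "(\<exists>k. v = replicate k True) \<or> (\<exists>i k. v = unary i @ replicate k True) \<or> v \<in> range pair_code"
    using assms unfolding pair_tree_def by blast
  then show ?thesis
  proof (elim disjE exE)
    fix k assume "v = replicate k True"
    then have "v @ [True] = replicate (Suc k) True" "v @ [False] = unary k @ replicate 0 True"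
      by (simp_all add: unary_def replicate_append_same[symmetric] del: replicate_append_same)
    then show ?thesis unfolding pair_tree_def by blast
  next
    fix i k assume "v = unary i @ replicate k True"
    then have "v @ [True] = unary i @ replicate (Suc k) True" "v @ [False] = pair_code (i, k)"
      by (simp_all add: pair_code_def unary_def replicate_append_same[symmetric]
          del: replicate_append_same)
    then show ?thesis unfolding pair_tree_def by blast
  qed auto
qed

lemma pair_code_prefix_code: "prefix_code pair_tree pair_code"
proof -
  have in_tree: "pair_code c \<in> pair_tree" for c unfolding pair_tree_def by auto
  have "full_tree pair_tree"
    unfolding full_tree_def
  proof (intro conjI allI impI ballI)
    show "[] \<in> pair_tree" unfolding pair_tree_def by (auto intro: exI[of _ 0])
    show "x @ y \<in> pair_tree \<Longrightarrow> x \<in> pair_tree" for x y by (rule pair_tree_prefix_closed)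
    show "(x @ [True] \<in> pair_tree) = (x @ [False] \<in> pair_tree)" if "x \<in> pair_tree" for x
      using pair_tree_branching[OF that] pair_code_childless by blast
  qed
  moreover have "leaves pair_tree = range pair_code"
    unfolding leaves_def using pair_tree_branching pair_code_childless in_tree by blast
  ultimately show ?thesis
    unfolding prefix_code_def using inj_pair_code by (simp add: bij_betw_def)
qed

lemma summable_Suc_times_power:
  fixes q :: real assumes "0 \<le> q" "q < 1"
  shows "summable (\<lambda>n. real (Suc n) * q ^ n)"
proof -
  have "summable (\<lambda>n. diffs (\<lambda>_. 1::real) n * q ^ n)"
    by (rule termdiff_converges[where K=1]) (use assms in auto)
  then show ?thesis by (simp add: diffs_def)
qed

lemma summable_on_product:
  fixes a b :: "nat \<Rightarrow> real"
  assumes "a summable_on UNIV" "b summable_on UNIV" "\<And>i. a i \<ge> 0" "\<And>j. b j \<ge> 0"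
  shows "(\<lambda>(i, j). a i * b j) summable_on UNIV"
proof -
  have "(\<lambda>(i, j). a i * b j) summable_on Sigma UNIV (\<lambda>_. UNIV)"
  proof (rule summable_on_SigmaI[where g="\<lambda>i. a i * infsum b UNIV"])
    show "((\<lambda>y. case (x, y) of (i, j) \<Rightarrow> a i * b j) has_sum a x * infsum b UNIV) UNIV" for x
      using has_sum_cmult_right[OF has_sum_infsum[OF assms(2)], of "a x"] by simp
    show "(\<lambda>i. a i * infsum b UNIV) summable_on UNIV"
      by (rule summable_on_cmult_left[OF assms(1)])
  qed (use assms in auto)
  then show ?thesis by simp
qed

lemma infsum_ennreal_of_summable:
  fixes f :: "'a \<Rightarrow> real"
  assumes summable: "f summable_on A" and nonneg: "\<And>x. x \<in> A \<Longrightarrow> f x \<ge> 0"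
  shows "(\<Sum>\<^sub>\<infinity>x\<in>A. ennreal (f x)) = ennreal (infsum f A)"
proof -
  have "infsum (ennreal \<circ> f) A = ennreal (infsum f A)"
  proof (rule infsum_comm_additive_general[OF _ _ summable])
    show "sum (ennreal \<circ> f) F = ennreal (sum f F)" if "finite F" "F \<subseteq> A" for F
      using that nonneg by (metis (mono_tags, lifting) comp_def subsetD sum.cong sum_ennreal)
  qed (use continuous_on_ennreal[OF continuous_on_id, of UNIV] in
       \<open>simp add: continuous_on_eq_continuous_at\<close>)
  then show ?thesis by (simp add: comp_def)
qed

lemma wcost_pair_code_finite:
  fixes q :: real assumes q: "0 < q" "q < 1"
  shows "wcost (tdgd q) pair_code < \<infinity>"
proof -
  have geom: "summable (\<lambda>n::nat. q ^ n)" using q by (simp add: summable_geometric)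
  have lin: "summable (\<lambda>n. (1 + real n) * q ^ n)" using summable_Suc_times_power[of q] q by simp
  (* (i + j + 2) q^(i+j) = (i + 1) q^i * q^j + q^i * (j + 1) q^j, a sum of two products *)
  define a1 where "a1 = (\<lambda>i. (1 - q)^2 * (real (Suc i) * q ^ i))"
  define b1 where "b1 = (\<lambda>j::nat. q ^ j)"
  define a2 where "a2 = (\<lambda>i::nat. (1 - q)^2 * q ^ i)"
  define b2 where "b2 = (\<lambda>j. real (Suc j) * q ^ j)"
  have "a1 summable_on UNIV" "a2 summable_on UNIV" "b1 summable_on UNIV" "b2 summable_on UNIV"
    unfolding a1_def a2_def b1_def b2_def using q
    by (auto intro!: summable_nonneg_imp_summable_on summable_mult geom lin)
  moreover have "a1 i \<ge> 0" "a2 i \<ge> 0" "b1 i \<ge> 0" "b2 i \<ge> 0" for i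
    unfolding a1_def a2_def b1_def b2_def using q by auto
  ultimately have "(\<lambda>(i, j). a1 i * b1 j) summable_on UNIV" "(\<lambda>(i, j). a2 i * b2 j) summable_on UNIV"
    by (auto intro!: summable_on_product)
  then have summable: "(\<lambda>c. (\<lambda>(i, j). a1 i * b1 j) c + (\<lambda>(i, j). a2 i * b2 j) c) summable_on UNIV"
    by (rule summable_on_add)
  define \<phi> where "\<phi> = (\<lambda>c. tdgd q c * real (length (pair_code c)))"
  have "\<phi> = (\<lambda>c. (\<lambda>(i, j). a1 i * b1 j) c + (\<lambda>(i, j). a2 i * b2 j) c)"
  proof
    fix c :: "nat \<times> nat"
    obtain i j where c: "c = (i, j)" by (cases c)
    show "\<phi> c = (\<lambda>(i, j). a1 i * b1 j) c + (\<lambda>(i, j). a2 i * b2 j) c"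
      unfolding c \<phi>_def a1_def b1_def a2_def b2_def tdgd_def length_pair_code
      by (simp add: power_add algebra_simps)
  qed
  with summable have "\<phi> summable_on UNIV" by simp
  moreover have "\<phi> c \<ge> 0" for c using q unfolding \<phi>_def tdgd_def by (auto split: prod.splits)
  ultimately have "wcost (tdgd q) pair_code = ennreal (infsum \<phi> UNIV)"
    unfolding wcost_def using infsum_ennreal_of_summable[of \<phi> UNIV] by (simp add: \<phi>_def)
  then show ?thesis by simp
qed

section \<open>Signature classes occupy at most two levels\<close>

lemma tdgd_pos: "0 < q \<Longrightarrow> q < 1 \<Longrightarrow> 0 < tdgd q c"
  by (cases c) (simp add: tdgd_def)

lemma tdgd_signature: "i + j = i' + j' \<Longrightarrow> tdgd q (i, j) = tdgd q (i', j')"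
  by (simp add: tdgd_def)

lemma optimal_tdgd:
  assumes q: "0 < q" "q < 1" and opt: "optimal q T f"
  shows "optimal_code (tdgd q) T f" and "wcost (tdgd q) f < \<infinity>"
proof -
  have exp_len: "exp_len q g = wcost (tdgd q) g" for g
    by (simp add: exp_len_def wcost_def)
  show "optimal_code (tdgd q) T f"
    using opt unfolding optimal_def optimal_code_def prefix_code_def exp_len by blast
  have "wcost (tdgd q) f \<le> wcost (tdgd q) pair_code"
    using opt pair_code_prefix_code unfolding optimal_def exp_len by blast
  then show "wcost (tdgd q) f < \<infinity>"
    using wcost_pair_code_finite[OF q] by (rule le_less_trans)
qed

theorem lemma1:
  fixes q :: real and T :: "bool list set" and f :: "nat \<times> nat \<Rightarrow> bool list"
  assumes "0 < q" and "q < 1" and "optimal q T f"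
  shows "\<forall>s. \<exists>d0. \<forall>i j. i + j = s \<longrightarrow> length (f (i, j)) \<in> {d0, d0 + 1}"
proof
  fix s
  note opt = optimal_tdgd[OF assms]
  define len where "len = (\<lambda>i. length (f (i, s - i)))"
  define d0 where "d0 = Min (len ` {..s})"
  have "d0 \<in> len ` {..s}" unfolding d0_def by (intro Min_in) auto
  then obtain i0 where i0: "i0 \<le> s" "len i0 = d0" by auto
  show "\<exists>d0. \<forall>i j. i + j = s \<longrightarrow> length (f (i, j)) \<in> {d0, d0 + 1}"
  proof (intro exI allI impI)
    fix i j assume ij: "i + j = s"
    have "length (f (i, j)) = len i" using ij by (auto simp: len_def)
    moreover have "d0 \<le> len i" unfolding d0_def using ij by (intro Min_le) auto
    ultimately have "d0 \<le> length (f (i, j))" by simp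
    moreover have "tdgd q (i0, s - i0) = tdgd q (i, j)" using i0 ij by (intro tdgd_signature) simp
    then have "length (f (i, j)) \<le> d0 + 1"
      using optimal_code_equal_weights[OF opt tdgd_pos[OF assms(1,2)]] i0 by (auto simp: len_def)
    ultimately show "length (f (i, j)) \<in> {d0, d0 + 1}" by auto
  qed
qed

end
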